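(* Let $((f_t),(g_t),(h_t))$ be a $W_{1,+}$-geodesic on $G$ and let $\gamma$ be an oriented path of length $n\ge0$. Then $$\partial_t C_\gamma(t)=\sum_{x_0\in\mathcal{E}(\gamma_0)}C_{x_0\cup\gamma}(t)-\sum_{x_2\in\mathcal{F}(\gamma_n)}C_{\gamma\cup x_2}(t),$$ where $x_0\cup\gamma$ is the oriented path $x_0,\gamma_0,\dots,\gamma_n$ and $\gamma\cup x_2$ is $\gamma_0,\dots,\gamma_n,x_2$.
   Context: $G$ is a connected, locally finite graph with graph distance $d$; geodesics are paths of adjacent vertices $\gamma(0),\dots,\gamma(n)$ with $n=d(\gamma(0),\gamma(n))$, $e_0(\gamma)=\gamma(0)$, $e_1(\gamma)=\gamma(n)$. For finitely supported probability distributions $f_0,f_1$: $\Pi_1(f_0,f_1)$ = couplings minimizing $\sum d(x,y)\pi(x,y)$ (minimum $W_1(f_0,f_1)$), $\mathcal{C}(f_0,f_1)=\{(x,y):\pi(x,y)>0$ for some $\pi\in\Pi_1\}$; $W_1$-orientation: adjacent $x,y$ get $x\to y$ iff some geodesic $\gamma$ with $(e_0(\gamma),e_1(\gamma))\in\mathcal{C}(f_0,f_1)$ has $\gamma(k)=x,\gamma(k+1)=y$. Oriented paths have $\gamma(i)\to\gamma(i+1)$; write $\gamma_i=\gamma(i)$. $E(G)=\{(xy):x\to y\}$, $T(G)=\{(x_0x_1x_2):x_0\to x_1\to x_2\}$, $\mathcal{F}(x)=\{y:x\to y\}$, $\mathcal{E}(x)=\{y:y\to x\}$; $\nabla g(x_1)=\sum_{x_2\in\mathcal{F}(x_1)}g(x_1x_2)-\sum_{x_0\in\mathcal{E}(x_1)}g(x_0x_1)$,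 $\nabla h(x_1x_2)=\sum_{x_3\in\mathcal{F}(x_2)}h(x_1x_2x_3)-\sum_{x_0\in\mathcal{E}(x_1)}h(x_0x_1x_2)$. A $W_1$-geodesic: $W_1(f_s,f_t)=|t-s|W_1(f_0,f_1)$. A $W_{1,+}$-geodesic: a $W_1$-geodesic $(f_t)$ from $f_0$ to $f_1$ (graph with the $W_1$-orientation w.r.t. $(f_0,f_1)$), differentiable in $t$, with $g_t:E(G)\to\mathbb{R}$, $h_t:T(G)\to\mathbb{R}$ such that $\partial_tf_t=-\nabla g_t$, $\partial_tg_t=-\nabla h_t$, $g_t>0$ on $E(G)$, $f_t(x_1)h_t(x_0x_1x_2)=g_t(x_0x_1)g_t(x_1x_2)$ on $T(G)$. For an oriented path $\gamma$ of length $n$: $C_\gamma(t)=f_t(\gamma_0)$ if $n=0$; $C_\gamma(t)=g_t(\gamma_0\gamma_1)$ if $n=1$; $C_\gamma(t)=\prod_{i=0}^{n-1}g_t(\gamma_i\gamma_{i+1})/\prod_{j=1}^{n-1}f_t(\gamma_j)$ if $n\ge2$. *)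

theory Defs
  imports Complex_Main
begin

text \<open>Graphs: vertices are the elements of type 'a, adjacency is adj.
  Walks are nonempty vertex lists; a list p of length n+1 has path length n.\<close>

definition is_walk :: "('a \<Rightarrow> 'a \<Rightarrow> bool) \<Rightarrow> 'a list \<Rightarrow> bool" where
  "is_walk adj p \<longleftrightarrow> p \<noteq> [] \<and> (\<forall>i. Suc i < length p \<longrightarrow> adj (p ! i) (p ! Suc i))"

definition gdist :: "('a \<Rightarrow> 'a \<Rightarrow> bool) \<Rightarrow> 'a \<Rightarrow> 'a \<Rightarrow> nat" where
  "gdist adj x y = (LEAST n. \<exists>p. is_walk adj p \<and> hd p = x \<and> last p = y \<and> length p = Suc n)"

definition geodesic :: "('a \<Rightarrow> 'a \<Rightarrow> bool) \<Rightarrow> 'a list \<Rightarrow> bool" where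
  "geodesic adj p \<longleftrightarrow> is_walk adj p \<and> length p - 1 = gdist adj (hd p) (last p)"

definition fs_prob_dist :: "('a \<Rightarrow> real) \<Rightarrow> bool" where
  "fs_prob_dist f \<longleftrightarrow> (\<forall>x. 0 \<le> f x) \<and> finite {x. f x \<noteq> 0} \<and> (\<Sum>x\<in>{x. f x \<noteq> 0}. f x) = 1"

definition coupling :: "('a \<Rightarrow> real) \<Rightarrow> ('a \<Rightarrow> real) \<Rightarrow> ('a \<times> 'a \<Rightarrow> real) \<Rightarrow> bool" where
  "coupling f0 f1 \<pi> \<longleftrightarrow> (\<forall>p. 0 \<le> \<pi> p) \<and> finite {p. \<pi> p \<noteq> 0}
     \<and> (\<forall>x. (\<Sum>y\<in>{y. \<pi> (x, y) \<noteq> 0}. \<pi> (x, y)) = f0 x)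
     \<and> (\<forall>y. (\<Sum>x\<in>{x. \<pi> (x, y) \<noteq> 0}. \<pi> (x, y)) = f1 y)"

definition transport_cost :: "('a \<Rightarrow> 'a \<Rightarrow> bool) \<Rightarrow> ('a \<times> 'a \<Rightarrow> real) \<Rightarrow> real" where
  "transport_cost adj \<pi> = (\<Sum>p\<in>{p. \<pi> p \<noteq> 0}. real (gdist adj (fst p) (snd p)) * \<pi> p)"

definition W1 :: "('a \<Rightarrow> 'a \<Rightarrow> bool) \<Rightarrow> ('a \<Rightarrow> real) \<Rightarrow> ('a \<Rightarrow> real) \<Rightarrow> real" where
  "W1 adj f0 f1 = Inf {transport_cost adj \<pi> | \<pi>. coupling f0 f1 \<pi>}"

definition optimal_couplings :: "('a \<Rightarrow> 'a \<Rightarrow> bool) \<Rightarrow> ('a \<Rightarrow> real) \<Rightarrow> ('a \<Rightarrow> real) \<Rightarrow> ('a \<times> 'a \<Rightarrow> real) set" where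
  "optimal_couplings adj f0 f1 = {\<pi>. coupling f0 f1 \<pi> \<and> transport_cost adj \<pi> = W1 adj f0 f1}"

definition opt_support :: "('a \<Rightarrow> 'a \<Rightarrow> bool) \<Rightarrow> ('a \<Rightarrow> real) \<Rightarrow> ('a \<Rightarrow> real) \<Rightarrow> ('a \<times> 'a) set" where
  "opt_support adj f0 f1 = {(x, y). \<exists>\<pi>\<in>optimal_couplings adj f0 f1. \<pi> (x, y) > 0}"

text \<open>The W1-orientation: w1_arrow adj f0 f1 x y means x \<rightarrow> y.\<close>

definition w1_arrow :: "('a \<Rightarrow> 'a \<Rightarrow> bool) \<Rightarrow> ('a \<Rightarrow> real) \<Rightarrow> ('a \<Rightarrow> real) \<Rightarrow> 'a \<Rightarrow> 'a \<Rightarrow> bool" where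
  "w1_arrow adj f0 f1 x y \<longleftrightarrow> adj x y \<and>
     (\<exists>p k. geodesic adj p \<and> (hd p, last p) \<in> opt_support adj f0 f1
            \<and> Suc k < length p \<and> p ! k = x \<and> p ! Suc k = y)"

definition div_edge :: "('a \<Rightarrow> 'a \<Rightarrow> bool) \<Rightarrow> ('a \<Rightarrow> 'a \<Rightarrow> real) \<Rightarrow> 'a \<Rightarrow> real" where
  "div_edge arr G x1 = (\<Sum>x2\<in>{y. arr x1 y}. G x1 x2) - (\<Sum>x0\<in>{y. arr y x1}. G x0 x1)"

definition div_tri :: "('a \<Rightarrow> 'a \<Rightarrow> bool) \<Rightarrow> ('a \<Rightarrow> 'a \<Rightarrow> 'a \<Rightarrow> real) \<Rightarrow> 'a \<Rightarrow> 'a \<Rightarrow> real" where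
  "div_tri arr H x1 x2 = (\<Sum>x3\<in>{y. arr x2 y}. H x1 x2 x3) - (\<Sum>x0\<in>{y. arr y x1}. H x0 x1 x2)"

definition W1_geodesic :: "('a \<Rightarrow> 'a \<Rightarrow> bool) \<Rightarrow> (real \<Rightarrow> 'a \<Rightarrow> real) \<Rightarrow> bool" where
  "W1_geodesic adj f \<longleftrightarrow> (\<forall>t\<in>{0..1}. fs_prob_dist (f t)) \<and>
     (\<forall>s\<in>{0..1}. \<forall>t\<in>{0..1}. W1 adj (f s) (f t) = \<bar>t - s\<bar> * W1 adj (f 0) (f 1))"

definition W1_plus_geodesic :: "('a \<Rightarrow> 'a \<Rightarrow> bool) \<Rightarrow> (real \<Rightarrow> 'a \<Rightarrow> real)
     \<Rightarrow> (real \<Rightarrow> 'a \<Rightarrow> 'a \<Rightarrow> real) \<Rightarrow> (real \<Rightarrow> 'a \<Rightarrow> 'a \<Rightarrow> 'a \<Rightarrow> real) \<Rightarrow> bool" where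
  "W1_plus_geodesic adj f g h \<longleftrightarrow> W1_geodesic adj f \<and>
     (let arr = w1_arrow adj (f 0) (f 1) in
       (\<forall>t\<in>{0..1}. \<forall>x. ((\<lambda>s. f s x) has_real_derivative (- div_edge arr (g t) x)) (at t within {0..1})) \<and>
       (\<forall>t\<in>{0..1}. \<forall>x y. arr x y \<longrightarrow>
          ((\<lambda>s. g s x y) has_real_derivative (- div_tri arr (h t) x y)) (at t within {0..1})) \<and>
       (\<forall>t\<in>{0..1}. \<forall>x y. arr x y \<longrightarrow> 0 < g t x y) \<and>
       (\<forall>t\<in>{0..1}. \<forall>x0 x1 x2. arr x0 x1 \<and> arr x1 x2 \<longrightarrow>
          f t x1 * h t x0 x1 x2 = g t x0 x1 * g t x1 x2))"

definition oriented_path :: "('a \<Rightarrow> 'a \<Rightarrow> bool) \<Rightarrow> 'a list \<Rightarrow> bool" where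
  "oriented_path arr \<gamma> \<longleftrightarrow> \<gamma> \<noteq> [] \<and> (\<forall>i. Suc i < length \<gamma> \<longrightarrow> arr (\<gamma> ! i) (\<gamma> ! Suc i))"

text \<open>C_gamma(t); the path gamma has length n = length gamma - 1.\<close>

definition Cpath :: "(real \<Rightarrow> 'a \<Rightarrow> real) \<Rightarrow> (real \<Rightarrow> 'a \<Rightarrow> 'a \<Rightarrow> real) \<Rightarrow> 'a list \<Rightarrow> real \<Rightarrow> real" where
  "Cpath f g \<gamma> t =
     (if length \<gamma> = 1 then f t (\<gamma> ! 0)
      else if length \<gamma> = 2 then g t (\<gamma> ! 0) (\<gamma> ! 1)
      else (\<Prod>i<length \<gamma> - 1. g t (\<gamma> ! i) (\<gamma> ! Suc i)) / (\<Prod>j\<in>{1..length \<gamma> - 2}. f t (\<gamma> ! j)))"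

end

theory Submission
  imports Defs
begin

text \<open>Write \<open>A u\<close> and \<open>B u\<close> for the total flow into and out of \<open>u\<close>, divided by the density \<open>f u\<close>.
  The closure condition \<open>f h = g g\<close> turns the second-order equation into a logarithmic one:
  \<open>\<partial>\<^sub>t log g(u,v) = A u - B v\<close>, and the continuity equation reads \<open>\<partial>\<^sub>t log f(u) = A u - B u\<close>.
  Hence the logarithmic derivative of \<open>C\<^sub>\<gamma>\<close>, a ratio of products of these quantities,
  telescopes to \<open>A \<gamma>\<^sub>0 - B \<gamma>\<^sub>n\<close>, and \<open>C\<^sub>\<gamma> A \<gamma>\<^sub>0\<close> and \<open>C\<^sub>\<gamma> B \<gamma>\<^sub>n\<close> are exactly the sums of
  \<open>C\<close> over the one-step extensions of \<open>\<gamma>\<close> at either end.\<close>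

lemma has_real_derivative_prod_logarithmic:
  fixes u :: "'b \<Rightarrow> real \<Rightarrow> real"
  assumes "finite A"
    and "\<And>x. x \<in> A \<Longrightarrow> (u x has_real_derivative u x z * d x) (at z within S)"
  shows "((\<lambda>s. \<Prod>x\<in>A. u x s) has_real_derivative (\<Prod>x\<in>A. u x z) * (\<Sum>x\<in>A. d x)) (at z within S)"
  using assms
proof (induction A rule: finite_induct)
  case (insert x A)
  have "(u x has_real_derivative u x z * d x) (at z within S)"
    and "((\<lambda>s. \<Prod>x\<in>A. u x s) has_real_derivative (\<Prod>x\<in>A. u x z) * (\<Sum>x\<in>A. d x)) (at z within S)"
    using insert.prems insert.IH by simp_all
  from DERIV_mult[OF this]
  have "((\<lambda>s. u x s * (\<Prod>x\<in>A. u x s)) has_real_derivative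
        u x z * d x * (\<Prod>x\<in>A. u x z) + u x z * ((\<Prod>x\<in>A. u x z) * (\<Sum>x\<in>A. d x))) (at z within S)"
    by (simp add: algebra_simps)
  then show ?case
    using insert.hyps by (simp add: algebra_simps)
qed simp

lemma has_real_derivative_divide_logarithmic:
  assumes "(P has_real_derivative P z * p) (at z within S)"
    and "(Q has_real_derivative Q z * q) (at z within S)"
    and "Q z \<noteq> 0"
  shows "((\<lambda>s. P s / Q s) has_real_derivative P z / Q z * (p - q)) (at z within S)"
proof -
  have "((\<lambda>s. P s / Q s) has_real_derivative
      (P z * p * Q z - P z * (Q z * q)) / (Q z * Q z)) (at z within S)"
    by (rule DERIV_divide[OF assms])
  moreover have "(P z * p * Q z - P z * (Q z * q)) / (Q z * Q z) = P z / Q z * (p - q)"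
    using assms(3) by (simp add: field_simps)
  ultimately show ?thesis by simp
qed

lemma sum_interior_telescope:
  fixes a b :: "nat \<Rightarrow> 'a::ab_group_add"
  shows "(\<Sum>i<Suc m. a i - b (Suc i)) - (\<Sum>j\<in>{1..m}. a j - b j) = a 0 - b (Suc m)"
  by (induction m) (simp_all add: algebra_simps)

definition inflow_ratio :: "('a \<Rightarrow> 'a \<Rightarrow> bool) \<Rightarrow> ('a \<Rightarrow> real) \<Rightarrow> ('a \<Rightarrow> 'a \<Rightarrow> real) \<Rightarrow> 'a \<Rightarrow> real"
  where "inflow_ratio arr F G u = (\<Sum>x\<in>{x. arr x u}. G x u) / F u"

definition outflow_ratio :: "('a \<Rightarrow> 'a \<Rightarrow> bool) \<Rightarrow> ('a \<Rightarrow> real) \<Rightarrow> ('a \<Rightarrow> 'a \<Rightarrow> real) \<Rightarrow> 'a \<Rightarrow> real"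
  where "outflow_ratio arr F G u = (\<Sum>y\<in>{y. arr u y}. G u y) / F u"

lemma div_edge_eq_flow_ratios:
  assumes "F u \<noteq> 0"
  shows "- div_edge arr G u = F u * (inflow_ratio arr F G u - outflow_ratio arr F G u)"
  using assms unfolding div_edge_def inflow_ratio_def outflow_ratio_def by (simp add: field_simps)

locale closed_flow =
  fixes arr :: "'a \<Rightarrow> 'a \<Rightarrow> bool"
    and F :: "'a \<Rightarrow> real" and G :: "'a \<Rightarrow> 'a \<Rightarrow> real" and H :: "'a \<Rightarrow> 'a \<Rightarrow> 'a \<Rightarrow> real"
  assumes flow_pos: "arr x y \<Longrightarrow> 0 < G x y"
    and closure: "arr x y \<Longrightarrow> arr y z \<Longrightarrow> F y * H x y z = G x y * G y z"
begin

lemma density_nonzero: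
  assumes "arr x u" and "arr u v"
  shows "F u \<noteq> 0"
proof
  assume "F u = 0"
  then have "G x u * G u v = 0"
    using closure[OF assms] by simp
  with flow_pos[OF \<open>arr x u\<close>] flow_pos[OF \<open>arr u v\<close>] show False
    by simp
qed

lemma oriented_path_density_nonzero:
  assumes "oriented_path arr \<gamma>" and "0 < j" and "Suc j < length \<gamma>"
  shows "F (\<gamma> ! j) \<noteq> 0"
proof -
  obtain i where j: "j = Suc i"
    using \<open>0 < j\<close> gr0_implies_Suc by blast
  show ?thesis
  proof (rule density_nonzero)
    show "arr (\<gamma> ! i) (\<gamma> ! j)" and "arr (\<gamma> ! j) (\<gamma> ! Suc j)"
      using assms unfolding oriented_path_def j by simp_all
  qed
qed

lemma div_tri_eq_flow_ratios:
  assumes "arr u v"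
  shows "- div_tri arr H u v = G u v * (inflow_ratio arr F G u - outflow_ratio arr F G v)"
proof -
  have H_eq: "H x y z = G x y * G y z / F y" if "arr x y" "arr y z" for x y z
    using closure[OF that] density_nonzero[OF that] by (simp add: field_simps)
  have "(\<Sum>x\<in>{x. arr x u}. H x u v) = (\<Sum>x\<in>{x. arr x u}. G u v * (G x u / F u))"
    using H_eq \<open>arr u v\<close> by (intro sum.cong) auto
  moreover have "(\<Sum>y\<in>{y. arr v y}. H u v y) = (\<Sum>y\<in>{y. arr v y}. G u v * (G v y / F v))"
    using H_eq \<open>arr u v\<close> by (intro sum.cong) auto
  ultimately show ?thesis
    unfolding div_tri_def inflow_ratio_def outflow_ratio_def
    by (simp add: sum_distrib_left sum_divide_distrib right_diff_distrib)
qed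

end

lemma Cpath_eq_quotient:
  assumes "length \<gamma> = Suc (Suc m)"
  shows "Cpath f g \<gamma> t = (\<Prod>i<Suc m. g t (\<gamma> ! i) (\<gamma> ! Suc i)) / (\<Prod>j\<in>{1..m}. f t (\<gamma> ! j))"
  using assms by (cases "m = 0") (simp_all add: Cpath_def)

text \<open>No hypothesis on \<open>f t (hd \<gamma>)\<close> is needed: if it vanishes, both sides are \<open>0\<close> since \<open>x / 0 = 0\<close>.\<close>

lemma Cpath_Cons:
  assumes "2 \<le> length \<gamma>"
  shows "Cpath f g (x # \<gamma>) t = g t x (hd \<gamma>) * Cpath f g \<gamma> t / f t (hd \<gamma>)"
proof -
  obtain m where m: "length \<gamma> = Suc (Suc m)"
    using assms by (metis add_2_eq_Suc le_Suc_ex)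
  define P where "P = (\<Prod>i<Suc m. g t (\<gamma> ! i) (\<gamma> ! Suc i))"
  define Q where "Q = (\<Prod>j\<in>{1..m}. f t (\<gamma> ! j))"
  have "(\<Prod>i<Suc (Suc m). g t ((x # \<gamma>) ! i) ((x # \<gamma>) ! Suc i)) = g t x (\<gamma> ! 0) * P"
    unfolding P_def by (subst prod.lessThan_Suc_shift) simp
  moreover have "(\<Prod>j\<in>{1..Suc m}. f t ((x # \<gamma>) ! j)) = f t (\<gamma> ! 0) * Q"
    unfolding Q_def One_nat_def prod.atLeast1_atMost_eq by (subst prod.lessThan_Suc_shift) simp
  ultimately have "Cpath f g (x # \<gamma>) t = g t x (\<gamma> ! 0) * P / (f t (\<gamma> ! 0) * Q)"
    using m by (simp add: Cpath_eq_quotient[of _ "Suc m"])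
  moreover have "Cpath f g \<gamma> t = P / Q"
    using m unfolding P_def Q_def by (simp add: Cpath_eq_quotient)
  moreover have "hd \<gamma> = \<gamma> ! 0"
    using m by (cases \<gamma>) auto
  ultimately show ?thesis by simp
qed

lemma Cpath_snoc:
  assumes "2 \<le> length \<gamma>"
  shows "Cpath f g (\<gamma> @ [y]) t = Cpath f g \<gamma> t * g t (last \<gamma>) y / f t (last \<gamma>)"
proof -
  obtain m where m: "length \<gamma> = Suc (Suc m)"
    using assms by (metis add_2_eq_Suc le_Suc_ex)
  define P where "P = (\<Prod>i<Suc m. g t (\<gamma> ! i) (\<gamma> ! Suc i))"
  define Q where "Q = (\<Prod>j\<in>{1..m}. f t (\<gamma> ! j))"
  have "(\<Prod>i<Suc (Suc m). g t ((\<gamma> @ [y]) ! i) ((\<gamma> @ [y]) ! Suc i)) = P * g t (\<gamma> ! Suc m) y"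
    unfolding P_def using m by (simp add: nth_append)
  moreover have "(\<Prod>j\<in>{1..Suc m}. f t ((\<gamma> @ [y]) ! j)) = Q * f t (\<gamma> ! Suc m)"
    unfolding Q_def using m by (auto simp: nth_append intro!: prod.cong)
  ultimately have "Cpath f g (\<gamma> @ [y]) t = P * g t (\<gamma> ! Suc m) y / (Q * f t (\<gamma> ! Suc m))"
    using m by (simp add: Cpath_eq_quotient[of _ "Suc m"])
  moreover have "Cpath f g \<gamma> t = P / Q"
    using m unfolding P_def Q_def by (simp add: Cpath_eq_quotient)
  moreover have "last \<gamma> = \<gamma> ! Suc m"
    using m last_conv_nth[of \<gamma>] by (metis diff_Suc_1 list.size(3) nat.distinct(1))
  ultimately show ?thesis by simp
qed

lemma sum_Cpath_Cons:
  assumes "2 \<le> length \<gamma>"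
  shows "(\<Sum>x\<in>X. Cpath f g (x # \<gamma>) t) = Cpath f g \<gamma> t * (\<Sum>x\<in>X. g t x (hd \<gamma>)) / f t (hd \<gamma>)"
  using assms by (simp add: Cpath_Cons sum_distrib_left sum_divide_distrib mult.commute)

lemma sum_Cpath_snoc:
  assumes "2 \<le> length \<gamma>"
  shows "(\<Sum>y\<in>Y. Cpath f g (\<gamma> @ [y]) t) = Cpath f g \<gamma> t * (\<Sum>y\<in>Y. g t (last \<gamma>) y) / f t (last \<gamma>)"
  using assms by (simp add: Cpath_snoc sum_distrib_left sum_divide_distrib)

lemma has_real_derivative_Cpath:
  assumes m: "length \<gamma> = Suc (Suc m)"
    and g: "\<And>i. i \<le> m \<Longrightarrow> ((\<lambda>s. g s (\<gamma> ! i) (\<gamma> ! Suc i)) has_real_derivative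
              g t (\<gamma> ! i) (\<gamma> ! Suc i) * (a (\<gamma> ! i) - b (\<gamma> ! Suc i))) (at t within S)"
    and f: "\<And>j. j \<in> {1..m} \<Longrightarrow> ((\<lambda>s. f s (\<gamma> ! j)) has_real_derivative
              f t (\<gamma> ! j) * (a (\<gamma> ! j) - b (\<gamma> ! j))) (at t within S)"
    and nz: "\<And>j. j \<in> {1..m} \<Longrightarrow> f t (\<gamma> ! j) \<noteq> 0"
  shows "(Cpath f g \<gamma> has_real_derivative Cpath f g \<gamma> t * (a (hd \<gamma>) - b (last \<gamma>))) (at t within S)"
proof -
  have P: "((\<lambda>s. \<Prod>i<Suc m. g s (\<gamma> ! i) (\<gamma> ! Suc i)) has_real_derivative
      (\<Prod>i<Suc m. g t (\<gamma> ! i) (\<gamma> ! Suc i)) * (\<Sum>i<Suc m. a (\<gamma> ! i) - b (\<gamma> ! Suc i))) (at t within S)"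
    using g by (intro has_real_derivative_prod_logarithmic) auto
  have Q: "((\<lambda>s. \<Prod>j\<in>{1..m}. f s (\<gamma> ! j)) has_real_derivative
      (\<Prod>j\<in>{1..m}. f t (\<gamma> ! j)) * (\<Sum>j\<in>{1..m}. a (\<gamma> ! j) - b (\<gamma> ! j))) (at t within S)"
    using f by (intro has_real_derivative_prod_logarithmic) auto
  have "(\<Prod>j\<in>{1..m}. f t (\<gamma> ! j)) \<noteq> 0"
    using nz by simp
  from has_real_derivative_divide_logarithmic[OF P Q this]
  have "(Cpath f g \<gamma> has_real_derivative Cpath f g \<gamma> t * (a (\<gamma> ! 0) - b (\<gamma> ! Suc m))) (at t within S)"
    unfolding sum_interior_telescope[of "\<lambda>i. a (\<gamma> ! i)" "\<lambda>i. b (\<gamma> ! i)"]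
    by (simp only: Cpath_eq_quotient[OF m, abs_def])
  moreover have "hd \<gamma> = \<gamma> ! 0"
    using m by (cases \<gamma>) auto
  moreover have "last \<gamma> = \<gamma> ! Suc m"
    using m last_conv_nth[of \<gamma>] by (metis diff_Suc_1 list.size(3) nat.distinct(1))
  ultimately show ?thesis by simp
qed

lemma has_real_derivative_Cpath_closed_flow:
  assumes flow: "closed_flow arr (f t) (g t) (h t)"
    and f_deriv: "\<And>x. ((\<lambda>s. f s x) has_real_derivative - div_edge arr (g t) x) (at t within S)"
    and g_deriv: "\<And>x y. arr x y \<Longrightarrow>
          ((\<lambda>s. g s x y) has_real_derivative - div_tri arr (h t) x y) (at t within S)"
    and path: "oriented_path arr \<gamma>"
  shows "(Cpath f g \<gamma> has_real_derivative
           (\<Sum>x\<in>{x. arr x (hd \<gamma>)}. Cpath f g (x # \<gamma>) t)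
         - (\<Sum>y\<in>{y. arr (last \<gamma>) y}. Cpath f g (\<gamma> @ [y]) t)) (at t within S)"
proof -
  consider (vertex) u where "\<gamma> = [u]" | (long) m where "length \<gamma> = Suc (Suc m)"
    using path unfolding oriented_path_def by (cases \<gamma>; cases "tl \<gamma>") auto
  then show ?thesis
  proof cases
    case vertex
    then have "Cpath f g \<gamma> = (\<lambda>s. f s u)"
      by (simp add: Cpath_def fun_eq_iff)
    with vertex f_deriv[of u] show ?thesis
      by (simp add: Cpath_def div_edge_def)
  next
    case long
    let ?A = "inflow_ratio arr (f t) (g t)" and ?B = "outflow_ratio arr (f t) (g t)"
    have interior: "f t (\<gamma> ! j) \<noteq> 0" if "j \<in> {1..m}" for j
      using closed_flow.oriented_path_density_nonzero[OF flow path] that long by simp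
    have "(Cpath f g \<gamma> has_real_derivative Cpath f g \<gamma> t * (?A (hd \<gamma>) - ?B (last \<gamma>))) (at t within S)"
    proof (rule has_real_derivative_Cpath[where f = f and g = g and t = t, OF long _ _ interior])
      fix i assume "i \<le> m"
      then have "arr (\<gamma> ! i) (\<gamma> ! Suc i)"
        using path long unfolding oriented_path_def by simp
      then show "((\<lambda>s. g s (\<gamma> ! i) (\<gamma> ! Suc i)) has_real_derivative
          g t (\<gamma> ! i) (\<gamma> ! Suc i) * (?A (\<gamma> ! i) - ?B (\<gamma> ! Suc i))) (at t within S)"
        using g_deriv closed_flow.div_tri_eq_flow_ratios[OF flow] by simp
    next
      fix j assume "j \<in> {1..m}"
      then show "((\<lambda>s. f s (\<gamma> ! j)) has_real_derivative
          f t (\<gamma> ! j) * (?A (\<gamma> ! j) - ?B (\<gamma> ! j))) (at t within S)"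
        using f_deriv[of "\<gamma> ! j"] div_edge_eq_flow_ratios[where F = "f t", OF interior] by simp
    qed
    moreover have "(\<Sum>x\<in>{x. arr x (hd \<gamma>)}. Cpath f g (x # \<gamma>) t) = Cpath f g \<gamma> t * ?A (hd \<gamma>)"
      and "(\<Sum>y\<in>{y. arr (last \<gamma>) y}. Cpath f g (\<gamma> @ [y]) t) = Cpath f g \<gamma> t * ?B (last \<gamma>)"
      using long by (simp_all add: sum_Cpath_Cons sum_Cpath_snoc inflow_ratio_def outflow_ratio_def)
    ultimately show ?thesis
      by (simp only: right_diff_distrib)
  qed
qed

lemma W1_plus_geodesicD:
  assumes "W1_plus_geodesic adj f g h" and "t \<in> {0..1}"
  defines "arr \<equiv> w1_arrow adj (f 0) (f 1)"
  shows W1_plus_geodesic_closed_flow: "closed_flow arr (f t) (g t) (h t)"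
    and W1_plus_geodesic_density_deriv:
      "((\<lambda>s. f s x) has_real_derivative - div_edge arr (g t) x) (at t within {0..1})"
    and W1_plus_geodesic_flow_deriv:
      "arr x y \<Longrightarrow> ((\<lambda>s. g s x y) has_real_derivative - div_tri arr (h t) x y) (at t within {0..1})"
  using assms unfolding W1_plus_geodesic_def closed_flow_def Let_def by blast+

theorem proposition3p2:
  fixes adj :: "'a \<Rightarrow> 'a \<Rightarrow> bool"
    and f :: "real \<Rightarrow> 'a \<Rightarrow> real"
    and g :: "real \<Rightarrow> 'a \<Rightarrow> 'a \<Rightarrow> real"
    and h :: "real \<Rightarrow> 'a \<Rightarrow> 'a \<Rightarrow> 'a \<Rightarrow> real"
    and \<gamma> :: "'a list" and t :: real
  assumes sym: "\<forall>x y. adj x y \<longrightarrow> adj y x"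
    and irrefl: "\<forall>x. \<not> adj x x"
    and connected: "\<forall>x y. \<exists>p. is_walk adj p \<and> hd p = x \<and> last p = y"
    and locfin: "\<forall>x. finite {y. adj x y}"
    and geo: "W1_plus_geodesic adj f g h"
    and path: "oriented_path (w1_arrow adj (f 0) (f 1)) \<gamma>"
    and t: "t \<in> {0..1}"
  shows "((\<lambda>s. Cpath f g \<gamma> s) has_real_derivative
           ((\<Sum>x0\<in>{x. w1_arrow adj (f 0) (f 1) x (hd \<gamma>)}. Cpath f g (x0 # \<gamma>) t)
          - (\<Sum>x2\<in>{x. w1_arrow adj (f 0) (f 1) (last \<gamma>) x}. Cpath f g (\<gamma> @ [x2]) t)))
         (at t within {0..1})"
  using has_real_derivative_Cpath_closed_flow[where arr = "w1_arrow adj (f 0) (f 1)"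
      and f = f and g = g and h = h and t = t, OF W1_plus_geodesic_closed_flow[OF geo t]
      W1_plus_geodesic_density_deriv[OF geo t] W1_plus_geodesic_flow_deriv[OF geo t] path]
  by simp

end
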